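(* Consider the selection task with rank queries. For every $n\ge1$, $k\ge1$ and $p\in[0,1]$, there is a deterministic algorithm that runs in $k$ rounds on a uniformly random input of length $n$, succeeds with probability at least $p$, and issues at most $np\bigl(1-\frac{k-1}{2k}p\bigr)+1$ queries in expectation.
   Context: Selection with rank queries: there is a vector $\vec{x}=(x_1,\ldots,x_n)$ whose ranks form an unknown permutation of $\{1,\ldots,n\}$; a rank $r\in\{1,\ldots,n\}$ is given and the goal is to output the index $i$ with $\mathrm{rank}(x_i)=r$. Queries have the form "How is $\mathrm{rank}(x_j)$ compared to $m$?", with answer "$<$", "$=$" or "$>$". An algorithm runs in $k$ rounds if in each of $k$ rounds it submits a set of queries chosen depending only on answers of earlier rounds, then receives all answers. "Uniformly random input" means the rank permutation is uniformly random; probabilities and expectations are over it. *)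

theory Defs
  imports Complex_Main "HOL-Combinatorics.Permutations"
begin

text \<open>Answer to a rank query "How is rank(x_j) compared to m?".\<close>
datatype ans = Lt | Eq | Gt

text \<open>The hidden input is a rank permutation \<sigma> of {1..n}: rank(x_i) = \<sigma> i.
  A query is a pair (j, m).\<close>
definition answer :: "(nat \<Rightarrow> nat) \<Rightarrow> nat \<times> nat \<Rightarrow> ans" where
  "answer \<sigma> q = (if \<sigma> (fst q) < snd q then Lt else if \<sigma> (fst q) = snd q then Eq else Gt)"

type_synonym history = "nat \<times> nat \<Rightarrow> ans option"

text \<open>A deterministic round-based algorithm is given by a query strategy
  Q t h (the set of queries submitted in round t, depending only on the answers h
  received in earlier rounds) and an output function applied to all answers received.
  hist Q \<sigma> t is the record of all answers after t rounds.\<close>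
fun hist :: "(nat \<Rightarrow> history \<Rightarrow> (nat \<times> nat) set) \<Rightarrow> (nat \<Rightarrow> nat) \<Rightarrow> nat \<Rightarrow> history" where
  "hist Q \<sigma> 0 = Map.empty"
| "hist Q \<sigma> (Suc t) =
     hist Q \<sigma> t ++ (\<lambda>q. if q \<in> Q t (hist Q \<sigma> t) then Some (answer \<sigma> q) else None)"

definition num_queries :: "(nat \<Rightarrow> history \<Rightarrow> (nat \<times> nat) set) \<Rightarrow> nat \<Rightarrow> (nat \<Rightarrow> nat) \<Rightarrow> nat" where
  "num_queries Q k \<sigma> = (\<Sum>t<k. card (Q t (hist Q \<sigma> t)))"

definition succeeds ::
  "nat \<Rightarrow> nat \<Rightarrow> nat \<Rightarrow> (nat \<Rightarrow> history \<Rightarrow> (nat \<times> nat) set) \<Rightarrow> (history \<Rightarrow> nat) \<Rightarrow> (nat \<Rightarrow> nat) \<Rightarrow> bool" where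
  "succeeds n r k Q out \<sigma> = (let i = out (hist Q \<sigma> k) in i \<in> {1..n} \<and> \<sigma> i = r)"

text \<open>Uniformly random input: all permutations of {1..n} are equally likely.\<close>
definition perms :: "nat \<Rightarrow> (nat \<Rightarrow> nat) set" where
  "perms n = {\<sigma>. \<sigma> permutes {1..n}}"

definition success_prob ::
  "nat \<Rightarrow> nat \<Rightarrow> nat \<Rightarrow> (nat \<Rightarrow> history \<Rightarrow> (nat \<times> nat) set) \<Rightarrow> (history \<Rightarrow> nat) \<Rightarrow> real" where
  "success_prob n r k Q out =
     real (card {\<sigma> \<in> perms n. succeeds n r k Q out \<sigma>}) / real (card (perms n))"

definition expected_queries :: "nat \<Rightarrow> nat \<Rightarrow> (nat \<Rightarrow> history \<Rightarrow> (nat \<times> nat) set) \<Rightarrow> real" where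
  "expected_queries n k Q = (\<Sum>\<sigma>\<in>perms n. real (num_queries Q k \<sigma>)) / real (card (perms n))"

end

theory Submission
  imports Defs
begin

(* Take x = n p and scan the positions in order, asking whether they hold rank r: round t asks
   the positions \<lceil>t x / k\<rceil> + 1, ..., \<lceil>(t + 1) x / k\<rceil>, unless rank r has already been found.
   This succeeds whenever the position of rank r is at most \<lceil>x\<rceil> \<ge> x, and that position is
   uniformly distributed on {1..n}. So with a_t = \<lceil>t x / k\<rceil> the expected number of queries is
   (1/n) \<Sum>_t (a_(t+1) - a_t) (n - a_t), a left Riemann sum of the integral of n - y over [0, x],
   which is n x - x^2/2. A step of width w \<le> x/k + 1 overshoots the integral by
   w^2/2 \<le> (x/k + 1) w/2, so the overshoots add up to at most x^2/(2k) + O(n). *)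

lemma hist_Suc_apply:
  "hist Q \<sigma> (Suc t) q = (if q \<in> Q t (hist Q \<sigma> t) then Some (answer \<sigma> q) else hist Q \<sigma> t q)"
  by (simp add: map_add_def)

lemma hist_apply:
  "hist Q \<sigma> t q = (if \<exists>s<t. q \<in> Q s (hist Q \<sigma> s) then Some (answer \<sigma> q) else None)"
  by (induction t) (auto simp: hist_Suc_apply less_Suc_eq simp del: hist.simps(2))

lemma answer_eq_Eq_iff [simp]: "answer \<sigma> q = Eq \<longleftrightarrow> \<sigma> (fst q) = snd q"
  by (simp add: answer_def)

lemma permutes_inv_in: "\<sigma> permutes S \<Longrightarrow> r \<in> S \<Longrightarrow> inv \<sigma> r \<in> S"
  by (simp add: permutes_in_image[OF permutes_inv])

lemma finite_perms: "finite (perms n)"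
  unfolding perms_def by (rule finite_permutations) simp

lemma card_perms_value_eq:
  assumes "i \<in> {1..n}" "j \<in> {1..n}"
  shows "card {\<sigma> \<in> perms n. \<sigma> i = r} = card {\<sigma> \<in> perms n. \<sigma> j = r}"
proof (rule bij_betw_same_card)
  show "bij_betw (\<lambda>\<sigma>. \<sigma> \<circ> transpose i j) {\<sigma> \<in> perms n. \<sigma> i = r} {\<sigma> \<in> perms n. \<sigma> j = r}"
    by (rule bij_betw_byWitness[where f' = "\<lambda>\<sigma>. \<sigma> \<circ> transpose i j"])
      (use assms in \<open>auto simp: perms_def comp_assoc intro!: permutes_compose permutes_swap_id\<close>)
qed

lemma sum_perms_position:
  assumes "r \<in> {1..n}"
  shows "(\<Sum>\<sigma>\<in>perms n. f (inv \<sigma> r)) = real (card {\<sigma> \<in> perms n. \<sigma> 1 = r}) * (\<Sum>j=1..n. f j)"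
proof -
  have position: "inv \<sigma> r \<in> {1..n}" "inv \<sigma> r = j \<longleftrightarrow> \<sigma> j = r" if "\<sigma> \<in> perms n" for \<sigma> j
  proof -
    have \<sigma>: "\<sigma> permutes {1..n}" using that by (simp add: perms_def)
    show "inv \<sigma> r \<in> {1..n}"
      using \<sigma> assms by (rule permutes_inv_in)
    show "inv \<sigma> r = j \<longleftrightarrow> \<sigma> j = r"
      by (rule permutes_inv_eq[OF \<sigma>])
  qed
  have "(\<Sum>\<sigma>\<in>perms n. f (inv \<sigma> r)) = (\<Sum>j=1..n. \<Sum>\<sigma>\<in>{\<sigma>\<in>perms n. inv \<sigma> r = j}. f (inv \<sigma> r))"
    by (rule sum.group[symmetric]) (use finite_perms position in auto)
  also have "\<dots> = (\<Sum>j=1..n. real (card {\<sigma>\<in>perms n. \<sigma> j = r}) * f j)"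
  proof (rule sum.cong[OF refl])
    fix j
    have "(\<Sum>\<sigma>\<in>{\<sigma>\<in>perms n. \<sigma> j = r}. f (inv \<sigma> r)) = (\<Sum>\<sigma>\<in>{\<sigma>\<in>perms n. \<sigma> j = r}. f j)"
      by (intro sum.cong refl arg_cong[where f = f]) (simp add: position(2))
    moreover have "{\<sigma>\<in>perms n. inv \<sigma> r = j} = {\<sigma>\<in>perms n. \<sigma> j = r}"
      using position(2) by blast
    ultimately show "(\<Sum>\<sigma>\<in>{\<sigma>\<in>perms n. inv \<sigma> r = j}. f (inv \<sigma> r)) = real (card {\<sigma>\<in>perms n. \<sigma> j = r}) * f j"
      by simp
  qed
  also have "\<dots> = (\<Sum>j=1..n. real (card {\<sigma> \<in> perms n. \<sigma> 1 = r}) * f j)"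
  proof (rule sum.cong[OF refl])
    fix j assume "j \<in> {1..n}"
    then show "real (card {\<sigma> \<in> perms n. \<sigma> j = r}) * f j = real (card {\<sigma> \<in> perms n. \<sigma> 1 = r}) * f j"
      using assms by (simp add: card_perms_value_eq[of j n 1 r])
  qed
  finally show ?thesis by (simp add: sum_distrib_left)
qed

lemma average_perms_position:
  fixes f :: "nat \<Rightarrow> real"
  assumes "r \<in> {1..n}"
  shows "(\<Sum>\<sigma>\<in>perms n. f (inv \<sigma> r)) / card (perms n) = (\<Sum>j=1..n. f j) / n"
proof -
  define c where "c = real (card {\<sigma> \<in> perms n. \<sigma> 1 = r})"
  have "card (perms n) = fact n"
    unfolding perms_def by (rule card_permutations) auto
  moreover have card_perms: "real (card (perms n)) = c * n"
    using sum_perms_position[OF assms, of "\<lambda>_. 1"] by (simp add: c_def)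
  ultimately have "c \<noteq> 0" by auto
  then show ?thesis
    using sum_perms_position[OF assms, of f] card_perms by (simp add: c_def)
qed

definition scan :: "(nat \<Rightarrow> nat) \<Rightarrow> nat \<Rightarrow> nat \<Rightarrow> history \<Rightarrow> (nat \<times> nat) set" where
  "scan a r t h = (if Eq \<in> ran h then {} else (\<lambda>j. (j, r)) ` {Suc (a t)..a (Suc t)})"

(* If no answer "=" was received, SOME picks an arbitrary index, which may still be correct. *)
definition scan_output :: "nat \<Rightarrow> history \<Rightarrow> nat" where
  "scan_output r h = (SOME j. h (j, r) = Some Eq)"

lemma scan_found_iff:
  assumes "mono a" "a 0 = 0" "\<sigma> permutes {1..n}" "r \<in> {1..n}"
  shows "Eq \<in> ran (hist (scan a r) \<sigma> t) \<longleftrightarrow> inv \<sigma> r \<le> a t"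
proof (induction t)
  case 0
  have "inv \<sigma> r \<in> {1..n}"
    using assms(3,4) by (rule permutes_inv_in)
  then show ?case using assms(2) by simp
next
  case (Suc t)
  show ?case
  proof (cases "Eq \<in> ran (hist (scan a r) \<sigma> t)")
    case True
    then have "hist (scan a r) \<sigma> (Suc t) = hist (scan a r) \<sigma> t"
      by (simp add: scan_def)
    moreover have "a t \<le> a (Suc t)"
      using assms(1) by (simp add: monoD)
    ultimately show ?thesis using True Suc.IH by simp
  next
    case False
    have "Eq \<in> ran (hist (scan a r) \<sigma> (Suc t)) \<longleftrightarrow> (\<exists>j \<in> {Suc (a t)..a (Suc t)}. \<sigma> j = r)"
      using False by (auto simp: ran_def hist_Suc_apply scan_def simp del: hist.simps(2) split: if_splits)
    also have "\<dots> \<longleftrightarrow> inv \<sigma> r \<in> {Suc (a t)..a (Suc t)}"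
      using permutes_inverses[OF assms(3)] by force
    finally show ?thesis using False Suc.IH by auto
  qed
qed

lemma scan_succeeds:
  assumes "mono a" "a 0 = 0" "\<sigma> permutes {1..n}" "r \<in> {1..n}" "inv \<sigma> r \<le> a k"
  shows "succeeds n r k (scan a r) (scan_output r) \<sigma>"
proof -
  let ?h = "hist (scan a r) \<sigma> k"
  have answered: "answer \<sigma> q = v \<and> snd q = r" if "?h q = Some v" for q v
    using that hist_apply[of "scan a r" \<sigma> k q] by (auto simp: scan_def split: if_splits)
  obtain q where "?h q = Some Eq"
    using scan_found_iff[OF assms(1-4), of k] assms(5) by (auto simp: ran_def)
  then have "?h (fst q, r) = Some Eq"
    using answered by (metis prod.collapse)
  then have "?h (scan_output r ?h, r) = Some Eq"
    unfolding scan_output_def by (rule someI)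
  from answered[OF this] have "\<sigma> (scan_output r ?h) = r"
    by simp
  moreover from this have "scan_output r ?h \<in> {1..n}"
    using permutes_in_image[OF assms(3)] assms(4) by metis
  ultimately show ?thesis by (simp add: succeeds_def)
qed

lemma scan_num_queries:
  assumes "mono a" "a 0 = 0" "\<sigma> permutes {1..n}" "r \<in> {1..n}"
  shows "num_queries (scan a r) k \<sigma> = (\<Sum>t<k. if inv \<sigma> r \<le> a t then 0 else a (Suc t) - a t)"
proof -
  have "card ((\<lambda>j. (j, r)) ` {Suc (a t)..a (Suc t)}) = a (Suc t) - a t" for t
    by (simp add: card_image inj_on_def)
  then show ?thesis
    by (auto simp: num_queries_def scan_def scan_found_iff[OF assms] intro!: sum.cong)
qed

lemma scan_success_prob:
  assumes "mono a" "a 0 = 0" "r \<in> {1..n}" "a k \<le> n"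
  shows "real (a k) / n \<le> success_prob n r k (scan a r) (scan_output r)"
proof -
  have "{1..n} \<inter> {j. j \<le> a k} = {1..a k}"
    using assms(4) by auto
  then have "real (a k) / n = (\<Sum>j=1..n. of_bool (j \<le> a k)) / n"
    by simp
  also have "\<dots> = (\<Sum>\<sigma>\<in>perms n. of_bool (inv \<sigma> r \<le> a k)) / card (perms n)"
    by (rule average_perms_position[OF assms(3), symmetric])
  also have "\<dots> = card {\<sigma> \<in> perms n. inv \<sigma> r \<le> a k} / card (perms n)"
    by (simp add: finite_perms Collect_conj_eq Int_commute)
  also have "\<dots> \<le> success_prob n r k (scan a r) (scan_output r)"
    unfolding success_prob_def
    using scan_succeeds[OF assms(1,2) _ assms(3)] finite_perms
    by (intro divide_right_mono of_nat_mono card_mono) (auto simp: perms_def)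
  finally show ?thesis .
qed

lemma scan_expected_queries:
  assumes "mono a" "a 0 = 0" "r \<in> {1..n}" "a k \<le> n"
  shows "expected_queries n k (scan a r)
           = (\<Sum>t<k. (real (a (Suc t)) - real (a t)) * (real n - real (a t))) / n"
proof -
  define cost where "cost j = (\<Sum>t<k. if j \<le> a t then 0 else real (a (Suc t)) - real (a t))" for j
  have step: "a t \<le> a (Suc t)" for t
    using assms(1) by (simp add: monoD)
  have "real (num_queries (scan a r) k \<sigma>) = cost (inv \<sigma> r)" if "\<sigma> \<in> perms n" for \<sigma>
    using that step by (auto simp: scan_num_queries[OF assms(1,2) _ assms(3)] perms_def cost_def
        of_nat_diff intro!: sum.cong)
  then have "expected_queries n k (scan a r) = (\<Sum>\<sigma>\<in>perms n. cost (inv \<sigma> r)) / card (perms n)"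
    by (simp add: expected_queries_def)
  also have "\<dots> = (\<Sum>j=1..n. cost j) / n"
    by (rule average_perms_position[OF assms(3)])
  also have "(\<Sum>j=1..n. cost j)
      = (\<Sum>t<k. \<Sum>j=1..n. if j \<le> a t then 0 else real (a (Suc t)) - real (a t))"
    unfolding cost_def by (rule sum.swap)
  also have "\<dots> = (\<Sum>t<k. (real (a (Suc t)) - real (a t)) * (real n - real (a t)))"
  proof (rule sum.cong[OF refl])
    fix t assume "t \<in> {..<k}"
    then have "a t \<le> n"
      using assms(1,4) by (meson le_trans lessThan_iff less_imp_le monoD)
    moreover have "{1..n} \<inter> - {j. j \<le> a t} = {Suc (a t)..n}"
      by auto
    ultimately show "(\<Sum>j=1..n. if j \<le> a t then 0 else real (a (Suc t)) - real (a t))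
        = (real (a (Suc t)) - real (a t)) * (real n - real (a t))"
      by (simp add: sum.If_cases of_nat_diff mult.commute)
  qed
  finally show ?thesis .
qed

(* An increment d = b (Suc t) - b t contributes d (N - b t) = H (b (Suc t)) - H (b t) + d\<^sup>2 / 2
   with H y = N y - y\<^sup>2 / 2, and d\<^sup>2 \<le> c d. *)
lemma sum_increments_times_gap_le:
  fixes b :: "nat \<Rightarrow> real"
  assumes "\<And>t. t < k \<Longrightarrow> 0 \<le> b (Suc t) - b t \<and> b (Suc t) - b t \<le> c"
  shows "(\<Sum>t<k. (b (Suc t) - b t) * (N - b t))
           \<le> N * (b k - b 0) - ((b k)\<^sup>2 - (b 0)\<^sup>2) / 2 + c / 2 * (b k - b 0)"
  using assms
proof (induction k)
  case 0
  then show ?case by simp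
next
  case (Suc k)
  define d where "d = b (Suc k) - b k"
  have "0 \<le> d * (c - d)"
    using Suc.prems[of k] by (simp add: d_def)
  moreover have "(\<Sum>t<k. (b (Suc t) - b t) * (N - b t))
      \<le> N * (b k - b 0) - ((b k)\<^sup>2 - (b 0)\<^sup>2) / 2 + c / 2 * (b k - b 0)"
    using Suc by simp
  moreover have "N * (b (Suc k) - b 0) - ((b (Suc k))\<^sup>2 - (b 0)\<^sup>2) / 2 + c / 2 * (b (Suc k) - b 0)
      = N * (b k - b 0) - ((b k)\<^sup>2 - (b 0)\<^sup>2) / 2 + c / 2 * (b k - b 0) + d * (N - b k) + d * (c - d) / 2"
    by (simp add: d_def power2_eq_square field_simps)
  ultimately show ?case
    by (simp add: d_def)
qed

definition schedule :: "nat \<Rightarrow> real \<Rightarrow> nat \<Rightarrow> nat" where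
  "schedule k x t = nat \<lceil>real t * x / real k\<rceil>"

lemma schedule_bounds:
  assumes "0 \<le> x"
  shows "real t * x / real k \<le> real (schedule k x t)"
    and "real (schedule k x t) \<le> real t * x / real k + 1"
  using assms by (simp_all add: schedule_def of_nat_nat of_int_ceiling_le_add_one)

lemma mono_schedule: "0 \<le> x \<Longrightarrow> mono (schedule k x)"
  unfolding schedule_def
  by (intro monoI nat_mono ceiling_mono divide_right_mono mult_right_mono) auto

lemma schedule_0 [simp]: "schedule k x 0 = 0"
  by (simp add: schedule_def)

lemma schedule_last_le: "k \<ge> 1 \<Longrightarrow> x \<le> real n \<Longrightarrow> schedule k x k \<le> n"
  by (simp add: schedule_def ceiling_le_iff nat_le_iff)

lemma schedule_cost_le:
  assumes "k \<ge> 1" "0 \<le> x" "x \<le> real n"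
  shows "(\<Sum>t<k. (real (schedule k x (Suc t)) - real (schedule k x t)) * (real n - real (schedule k x t)))
           \<le> real n * x - x\<^sup>2 * (real k - 1) / (2 * real k) + real n"
proof -
  define m where "m = real (schedule k x k)"
  define d where "d = m - x"
  have "m \<le> real n"
    using schedule_last_le[OF assms(1,3)] by (simp add: m_def)
  moreover have "x \<le> m" "m \<le> x + 1"
    using schedule_bounds[OF assms(2), of k k] assms(1) by (simp_all add: m_def)
  ultimately have d: "0 \<le> d" "d \<le> 1" "x + d \<le> real n"
    by (simp_all add: d_def)
  have "0 \<le> real (schedule k x (Suc t)) - real (schedule k x t)
          \<and> real (schedule k x (Suc t)) - real (schedule k x t) \<le> x / real k + 1" for t
    using schedule_bounds[OF assms(2), where k = k and t = "Suc t"]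
      schedule_bounds[OF assms(2), where k = k and t = t]
      monoD[OF mono_schedule[OF assms(2)], of t "Suc t"]
    by (auto simp: add_divide_distrib distrib_right)
  then have "(\<Sum>t<k. (real (schedule k x (Suc t)) - real (schedule k x t)) * (real n - real (schedule k x t)))
      \<le> real n * m - m\<^sup>2 / 2 + (x / real k + 1) / 2 * m"
    using sum_increments_times_gap_le[of k "\<lambda>t. real (schedule k x t)" "x / real k + 1" "real n"]
    by (simp add: m_def)
  also have "\<dots> = real n * x - x\<^sup>2 * (real k - 1) / (2 * real k) + real n
      - ((1 - d) * (real n - x - d) + x / 2 * (1 - d / real k) + d * (1 - d) / 2)"
    using assms(1) by (simp add: m_def[symmetric] d_def power2_eq_square field_simps)
  also have "\<dots> \<le> real n * x - x\<^sup>2 * (real k - 1) / (2 * real k) + real n"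
  proof -
    have "d / real k \<le> 1"
      using d assms(1) by (simp add: divide_le_eq)
    then have "0 \<le> (1 - d) * (real n - x - d)" "0 \<le> x / 2 * (1 - d / real k)" "0 \<le> d * (1 - d) / 2"
      using d assms(2) by simp_all
    then show ?thesis
      by linarith
  qed
  finally show ?thesis .
qed

theorem proposition8:
  fixes n k r :: nat and p :: real
  assumes "n \<ge> 1" and "k \<ge> 1" and "0 \<le> p" and "p \<le> 1" and "r \<in> {1..n}"
  shows "\<exists>(Q :: nat \<Rightarrow> history \<Rightarrow> (nat \<times> nat) set) (out :: history \<Rightarrow> nat).
           (\<forall>t h. finite (Q t h)) \<and>
           success_prob n r k Q out \<ge> p \<and>
           expected_queries n k Q \<le> real n * p * (1 - (real k - 1) / (2 * real k) * p) + 1"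
proof -
  define x where "x = real n * p"
  define a where "a = schedule k x"
  have x: "0 \<le> x" "x \<le> real n"
    using assms by (simp_all add: x_def mult_left_le)
  have a: "mono a" "a 0 = 0" "a k \<le> n"
    using mono_schedule[OF x(1)] schedule_last_le[OF assms(2) x(2)] by (simp_all add: a_def)
  have "p \<le> real (a k) / n"
    using schedule_bounds(1)[OF x(1), where k = k and t = k] assms(1,2)
    by (simp add: a_def x_def field_simps)
  also have "\<dots> \<le> success_prob n r k (scan a r) (scan_output r)"
    by (rule scan_success_prob[OF a(1,2) assms(5) a(3)])
  finally have success: "p \<le> success_prob n r k (scan a r) (scan_output r)" .
  have "expected_queries n k (scan a r) \<le> (real n * x - x\<^sup>2 * (real k - 1) / (2 * real k) + real n) / n"
    unfolding scan_expected_queries[OF a(1,2) assms(5) a(3)]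
    using schedule_cost_le[OF assms(2) x] by (simp add: a_def divide_right_mono)
  also have "\<dots> = real n * p * (1 - (real k - 1) / (2 * real k) * p) + 1"
    using assms(1) by (simp add: x_def field_simps power2_eq_square)
  finally have "expected_queries n k (scan a r) \<le> real n * p * (1 - (real k - 1) / (2 * real k) * p) + 1" .
  moreover have "\<forall>t h. finite (scan a r t h)"
    by (simp add: scan_def)
  ultimately show ?thesis
    using success by blast
qed

end
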